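(* Let $M$ be a closed manifold, $f\colon M\to M$ a map, $n\ge2$, and $k,l$ positive integers with $kl=n$. Let $\Phi_n(f)\colon M^n\to M^n$, $(x_1,\dots,x_n)\mapsto(f(x_n),f(x_1),\dots,f(x_{n-1}))$, which is equivariant for the cyclic action of $\mathbb{Z}_n=\langle g\rangle$, $g(x_1,\dots,x_n)=(x_n,x_1,\dots,x_{n-1})$. Identify $(M^n)^{\mathbb{Z}_k}$ (fixed points of the subgroup of order $k$) with $M^l$ via the first $l$ coordinates, and let $\Phi_n^k(f)$ be the restriction of $\Phi_n(f)$ to $(M^n)^{\mathbb{Z}_k}$; its fixed points are exactly the points $(x,f(x),\dots,f^{l-1}(x))$ (repeated $k$ times) with $f^l(x)=x$. Then \[\mathrm{Fix}^c(\Phi_n^k(f))\to\mathrm{Fix}^c(f^l),\qquad[(x,f(x),\dots,f^{l-1}(x))]\mapsto[x]\] is a well-defined bijection.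
   Context: For a self-map $h$ of a space $Y$, two fixed points $y,y'$ lie in the same fixed point class if there is a path $\alpha$ from $y$ to $y'$ with $\alpha\simeq h(\alpha)$ relative to endpoints; $\mathrm{Fix}^c(h)$ denotes the set of fixed point classes. $f^l$ is the $l$-fold composite of $f$. *)

theory Defs
  imports "HOL-Analysis.Analysis"
begin

definition closed_manifold :: "'a topology \<Rightarrow> bool" where
  "closed_manifold X \<longleftrightarrow> compact_space X \<and> Hausdorff_space X \<and> second_countable X \<and>
     (\<exists>d. \<forall>x \<in> topspace X. \<exists>U. openin X U \<and> x \<in> U \<and>
        (\<exists>V. openin (Euclidean_space d) V \<and>
             subtopology X U homeomorphic_space subtopology (Euclidean_space d) V))"

definition fpc_rel :: "'a topology \<Rightarrow> ('a \<Rightarrow> 'a) \<Rightarrow> ('a \<times> 'a) set" where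
  "fpc_rel Y h = {(y, y'). y \<in> topspace Y \<and> h y = y \<and> y' \<in> topspace Y \<and> h y' = y' \<and>
     (\<exists>\<alpha>. pathin Y \<alpha> \<and> \<alpha> 0 = y \<and> \<alpha> 1 = y' \<and>
        homotopic_with (\<lambda>\<beta>. \<beta> 0 = y \<and> \<beta> 1 = y') (top_of_set {0..1}) Y \<alpha> (h \<circ> \<alpha>))}"

definition fixpts :: "'a topology \<Rightarrow> ('a \<Rightarrow> 'a) \<Rightarrow> 'a set" where
  "fixpts Y h = {y \<in> topspace Y. h y = y}"

definition fix_classes :: "'a topology \<Rightarrow> ('a \<Rightarrow> 'a) \<Rightarrow> 'a set set" where
  "fix_classes Y h = fixpts Y h // fpc_rel Y h"

definition fix_class :: "'a topology \<Rightarrow> ('a \<Rightarrow> 'a) \<Rightarrow> 'a \<Rightarrow> 'a set" where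
  "fix_class Y h y = fpc_rel Y h `` {y}"

text \<open>M^n as extensional functions on {0..<n} (coordinate i is x_{i+1}).\<close>
definition power_top :: "'a topology \<Rightarrow> nat \<Rightarrow> (nat \<Rightarrow> 'a) topology" where
  "power_top X n = product_topology (\<lambda>i. X) {..<n}"

definition Phi :: "nat \<Rightarrow> ('a \<Rightarrow> 'a) \<Rightarrow> (nat \<Rightarrow> 'a) \<Rightarrow> (nat \<Rightarrow> 'a)" where
  "Phi n f x = (\<lambda>i. if i < n then f (x ((i + n - 1) mod n)) else undefined)"

definition cyc :: "nat \<Rightarrow> (nat \<Rightarrow> 'a) \<Rightarrow> (nat \<Rightarrow> 'a)" where
  "cyc n x = (\<lambda>i. if i < n then x ((i + n - 1) mod n) else undefined)"

text \<open>(M^n)^{Z_k}: fixed points of the subgroup of order k, generated by g^l where kl = n.\<close>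
definition fixed_Zk :: "'a topology \<Rightarrow> nat \<Rightarrow> nat \<Rightarrow> (nat \<Rightarrow> 'a) set" where
  "fixed_Zk X n k = {x \<in> topspace (power_top X n). \<forall>j < k. (cyc n ^^ (j * (n div k))) x = x}"

definition orbit_pt :: "nat \<Rightarrow> nat \<Rightarrow> ('a \<Rightarrow> 'a) \<Rightarrow> 'a \<Rightarrow> (nat \<Rightarrow> 'a)" where
  "orbit_pt n l f x = (\<lambda>i. if i < n then (f ^^ (i mod l)) x else undefined)"

end

theory Submission
  imports Defs
begin

(* A fixed point of Phi_n(f) in (M^n)^{Z_k} is an l-tuple (y_0, ..., y_{l-1}), repeated k times,
   satisfying the cyclic recurrence y_j = f(y_{j-1}) (indices mod l). Hence it is the orbit tuple
   of x = y_0, and f^l(x) = x, so y |-> y_0 is a bijection of fixed point sets.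
   The same recurrence, one level up, matches the fixed point classes. Reading a homotopy
   alpha ~ Phi_n(f) o alpha rel endpoints coordinatewise gives homotopies alpha_j ~ f o alpha_{j-1},
   which chain to alpha_0 ~ f^l o alpha_0. Conversely, a homotopy gamma ~ f^l o gamma, placed in
   the coordinates divisible by l (and constant in the others), deforms the orbit path of gamma
   into its image under Phi_n(f). *)

text \<open>The identification of M^l with (M^n)^{Z_k}: an l-tuple repeated up to length n.\<close>

definition repeat_tuple :: "nat \<Rightarrow> nat \<Rightarrow> (nat \<Rightarrow> 'a) \<Rightarrow> nat \<Rightarrow> 'a" where
  "repeat_tuple n l c = (\<lambda>i. if i < n then c (i mod l) else undefined)"

lemma orbit_pt_eq_repeat_tuple: "orbit_pt n l f x = repeat_tuple n l (\<lambda>j. (f ^^ j) x)"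
  by (simp add: orbit_pt_def repeat_tuple_def)

lemma repeat_tuple_cong:
  "0 < l \<Longrightarrow> (\<And>j. j < l \<Longrightarrow> c j = d j) \<Longrightarrow> repeat_tuple n l c = repeat_tuple n l d"
  by (simp add: repeat_tuple_def fun_eq_iff)

lemma repeat_tuple_nth_less: "j < l \<Longrightarrow> l \<le> n \<Longrightarrow> repeat_tuple n l c j = c j"
  by (simp add: repeat_tuple_def)

lemma pred_mod_mod_dvd:
  assumes "l dvd n" "0 < l" "i < (n::nat)"
  shows "((i + n - 1) mod n) mod l = (i mod l + l - 1) mod l"
proof -
  have "l \<le> n" using assms by (simp add: dvd_imp_le)
  obtain c where c: "n - l = l * c" using assms(1) by (metis dvd_diff_nat dvd_refl dvdE)
  have "i + n - 1 = (i mod l + l - 1) + l * (i div l + c)"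
    using c \<open>l \<le> n\<close> assms(2) by (simp add: algebra_simps)
  then show ?thesis using assms(1) by (simp add: mod_mod_cancel)
qed

lemma Phi_repeat_tuple:
  assumes "l dvd n" "0 < l"
  shows "Phi n f (repeat_tuple n l c) = repeat_tuple n l (\<lambda>j. f (c ((j + l - 1) mod l)))"
  using pred_mod_mod_dvd[OF assms] by (simp add: Phi_def repeat_tuple_def fun_eq_iff)

lemma cyc_funpow:
  assumes "x \<in> extensional {..<n}" "0 < n"
  shows "(cyc n ^^ m) x = (\<lambda>i. if i < n then x ((i + (n - 1) * m) mod n) else undefined)"
proof (induction m)
  case 0
  show ?case using assms by (auto simp: extensional_def)
next
  case (Suc m)
  have "((i + n - 1) mod n + (n - 1) * m) mod n = (i + (n - 1) * Suc m) mod n" for i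
  proof -
    have "((i + n - 1) mod n + (n - 1) * m) mod n = (i + n - 1 + (n - 1) * m) mod n"
      by (simp add: mod_add_left_eq)
    also have "i + n - 1 + (n - 1) * m = i + (n - 1) * Suc m" using assms(2) by simp
    finally show ?thesis .
  qed
  then show ?case using Suc by (auto simp: cyc_def fun_eq_iff)
qed

lemma topspace_power_top: "topspace (power_top M n) = PiE {..<n} (\<lambda>_. topspace M)"
  by (simp add: power_top_def topspace_product_topology)

lemma cyc_invariant_iff_repeat_tuple:
  assumes "k * l = n" "0 < k" "0 < l" and y: "y \<in> extensional {..<n}"
  shows "(\<forall>j<k. (cyc n ^^ (j * l)) y = y) \<longleftrightarrow> repeat_tuple n l y = y"
proof
  have n: "0 < n" using assms by auto
  assume cyc: "\<forall>j<k. (cyc n ^^ (j * l)) y = y"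
  have "y (i mod l) = y i" if "i < n" for i
  proof -
    define m where "m = i div l * l"
    have "i div l < k" using that assms by (metis div_less_iff_less_mult mult.commute)
    then have "(cyc n ^^ m) y = y" using cyc unfolding m_def by blast
    then have "y i = y ((i + (n - 1) * m) mod n)"
      using fun_cong[OF cyc_funpow[OF y n, of m], of i] that by simp
    also have "i + (n - 1) * m = i mod l + n * m"
    proof -
      have "i = i mod l + m" "m \<le> n * m" unfolding m_def using n by simp_all
      then show ?thesis by (simp add: diff_mult_distrib)
    qed
    finally show ?thesis using that by (simp add: le_less_trans[OF mod_less_eq_dividend])
  qed
  then show "repeat_tuple n l y = y" using y by (auto simp: repeat_tuple_def extensional_def)
next
  have n: "0 < n" "l dvd n" using assms by auto
  assume rep: "repeat_tuple n l y = y"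
  have periodic: "y i = y (i mod l)" if "i < n" for i
    using fun_cong[OF rep, of i] that by (simp add: repeat_tuple_def)
  have "y ((i + (n - 1) * (j * l)) mod n) = y i" if "i < n" for i j
  proof -
    have "((i + (n - 1) * (j * l)) mod n) mod l = i mod l"
      using n(2) by (simp add: mod_mod_cancel) (metis mod_mult_self2 mult.commute mult.left_commute)
    then show ?thesis using periodic[OF that] periodic[of "(i + (n - 1) * (j * l)) mod n"] n(1)
      by simp
  qed
  then show "\<forall>j<k. (cyc n ^^ (j * l)) y = y"
    using y by (auto simp: cyc_funpow[OF y n(1)] fun_eq_iff extensional_def)
qed

lemma fixed_Zk_eq_repeat_tuple:
  assumes "k * l = n" "0 < k" "0 < l"
  shows "fixed_Zk M n k = {y \<in> topspace (power_top M n). repeat_tuple n l y = y}"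
proof -
  have "n div k = l" using assms by auto
  then show ?thesis
    unfolding fixed_Zk_def using cyc_invariant_iff_repeat_tuple[OF assms]
    by (auto simp: topspace_power_top PiE_def)
qed

lemma topspace_subtopology_fixed_Zk:
  "topspace (subtopology (power_top M n) (fixed_Zk M n k)) = fixed_Zk M n k"
  by (auto simp: fixed_Zk_def)

lemma repeat_tuple_in_fixed_Zk:
  assumes "k * l = n" "0 < k" "0 < l" "\<And>j. j < l \<Longrightarrow> c j \<in> topspace M"
  shows "repeat_tuple n l c \<in> fixed_Zk M n k"
proof -
  have "l \<le> n" using assms(1-3) by (metis dvd_imp_le dvd_triv_right mult_pos_pos)
  then have "repeat_tuple n l (repeat_tuple n l c) = repeat_tuple n l c"
    using assms(3) by (simp add: repeat_tuple_def fun_eq_iff less_le_trans[OF mod_less_divisor])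
  moreover have "repeat_tuple n l c \<in> topspace (power_top M n)"
    using assms(3,4) by (simp add: topspace_power_top repeat_tuple_def PiE_def extensional_def)
  ultimately show ?thesis using fixed_Zk_eq_repeat_tuple[OF assms(1-3)] by blast
qed

lemma continuous_map_repeat_tuple:
  assumes "k * l = n" "0 < k" "0 < l" "\<And>j. j < l \<Longrightarrow> continuous_map X M (\<lambda>z. c z j)"
  shows "continuous_map X (subtopology (power_top M n) (fixed_Zk M n k))
           (\<lambda>z. repeat_tuple n l (c z))"
  unfolding continuous_map_in_subtopology
proof
  show "continuous_map X (power_top M n) (\<lambda>z. repeat_tuple n l (c z))"
    using assms(3,4)
    by (auto simp: power_top_def continuous_map_componentwise repeat_tuple_def extensional_def)
  show "(\<lambda>z. repeat_tuple n l (c z)) \<in> topspace X \<rightarrow> fixed_Zk M n k"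
    using assms
    by (auto intro!: repeat_tuple_in_fixed_Zk dest: continuous_map_image_subset_topspace)
qed

lemma funpow_Suc_pred: "0 < l \<Longrightarrow> g ((g ^^ (l - 1)) x) = (g ^^ l) x"
  using funpow.simps(2)[of "l - 1" g] by simp

lemma continuous_map_funpow: "continuous_map X X g \<Longrightarrow> continuous_map X X (g ^^ j)"
  by (induction j) (auto intro: continuous_map_compose)

lemma funpow_in_topspace:
  "continuous_map M M f \<Longrightarrow> x \<in> topspace M \<Longrightarrow> (f ^^ j) x \<in> topspace M"
  by (induction j) (auto simp: continuous_map_def)

lemma cyclic_recurrence_funpow:
  assumes "0 < l" and rec: "\<And>j. j < l \<Longrightarrow> c j = g (c ((j + l - 1) mod l))"
  shows "\<forall>j<l. c j = (g ^^ j) (c 0)" and "(g ^^ l) (c 0) = c 0"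
proof -
  show iter: "\<forall>j<l. c j = (g ^^ j) (c 0)"
  proof (intro allI impI)
    fix j assume "j < l"
    then show "c j = (g ^^ j) (c 0)"
    proof (induction j)
      case (Suc j)
      then show ?case using rec[of "Suc j"] by simp
    qed simp
  qed
  have "c 0 = g (c (l - 1))" using rec[of 0] assms(1) by simp
  also have "\<dots> = g ((g ^^ (l - 1)) (c 0))" using iter[rule_format, of "l - 1"] assms(1) by simp
  also have "\<dots> = (g ^^ l) (c 0)" using funpow_Suc_pred[OF assms(1)] .
  finally show "(g ^^ l) (c 0) = c 0" by (rule sym)
qed

lemma Phi_orbit_pt:
  assumes "l dvd n" "0 < l"
  shows "Phi n f (orbit_pt n l f x) =
           repeat_tuple n l (\<lambda>j. if j = 0 then (f ^^ l) x else (f ^^ j) x)"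
proof -
  have "f ((f ^^ ((j + l - 1) mod l)) x) = (if j = 0 then (f ^^ l) x else (f ^^ j) x)"
    if "j < l" for j
  proof (cases j)
    case 0
    then show ?thesis using assms(2) funpow_Suc_pred[OF assms(2), of f x] by simp
  next
    case (Suc m)
    then show ?thesis using that by simp
  qed
  then show ?thesis
    unfolding orbit_pt_eq_repeat_tuple Phi_repeat_tuple[OF assms]
    by (intro repeat_tuple_cong[OF assms(2)])
qed

lemma Phi_fixed_point_eq_orbit_pt:
  assumes kl: "k * l = n" "0 < k" "0 < l" and y: "y \<in> fixed_Zk M n k" "Phi n f y = y"
  shows "y = orbit_pt n l f (y 0)" and "(f ^^ l) (y 0) = y 0"
proof -
  have "l dvd n" "l \<le> n" using kl by auto
  have rep: "repeat_tuple n l y = y" using y(1) fixed_Zk_eq_repeat_tuple[OF kl] by blast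
  have "y j = f (y ((j + l - 1) mod l))" if "j < l" for j
  proof -
    have "y j = Phi n f (repeat_tuple n l y) j" using y(2) rep by simp
    also have "\<dots> = f (y ((j + l - 1) mod l))"
      using that \<open>l \<le> n\<close>
      by (simp add: Phi_repeat_tuple[OF \<open>l dvd n\<close> kl(3)] repeat_tuple_nth_less)
    finally show ?thesis .
  qed
  note iter = cyclic_recurrence_funpow[of l y f, OF kl(3) this]
  have "repeat_tuple n l y = orbit_pt n l f (y 0)"
    unfolding orbit_pt_eq_repeat_tuple using iter(1) by (intro repeat_tuple_cong[OF kl(3)]) blast
  then show "y = orbit_pt n l f (y 0)" using rep by simp
  show "(f ^^ l) (y 0) = y 0" by (rule iter(2))
qed

lemma Phi_orbit_pt_fixed:
  assumes "l dvd n" "0 < l" "(f ^^ l) x = x"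
  shows "Phi n f (orbit_pt n l f x) = orbit_pt n l f x"
  unfolding Phi_orbit_pt[OF assms(1,2)] unfolding orbit_pt_eq_repeat_tuple
  using assms(3) by (intro repeat_tuple_cong[OF assms(2)]) simp

lemma fixpts_Phi_eq:
  assumes f: "continuous_map M M f" and kl: "k * l = n" "0 < k" "0 < l"
  shows "fixpts (subtopology (power_top M n) (fixed_Zk M n k)) (Phi n f) =
           orbit_pt n l f ` fixpts M (f ^^ l)"
proof
  have "l dvd n" "0 < n" using kl by auto
  show "fixpts (subtopology (power_top M n) (fixed_Zk M n k)) (Phi n f) \<subseteq>
          orbit_pt n l f ` fixpts M (f ^^ l)"
  proof
    fix y assume "y \<in> fixpts (subtopology (power_top M n) (fixed_Zk M n k)) (Phi n f)"
    then have y: "y \<in> fixed_Zk M n k" "Phi n f y = y"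
      by (auto simp: fixpts_def topspace_subtopology_fixed_Zk)
    moreover have "y 0 \<in> topspace M"
      using y(1) \<open>0 < n\<close> unfolding fixed_Zk_def topspace_power_top by (auto simp: PiE_iff)
    ultimately show "y \<in> orbit_pt n l f ` fixpts M (f ^^ l)"
      using Phi_fixed_point_eq_orbit_pt[OF kl y] unfolding fixpts_def by blast
  qed
  show "orbit_pt n l f ` fixpts M (f ^^ l) \<subseteq>
          fixpts (subtopology (power_top M n) (fixed_Zk M n k)) (Phi n f)"
  proof
    fix y assume "y \<in> orbit_pt n l f ` fixpts M (f ^^ l)"
    then obtain x where x: "x \<in> topspace M" "(f ^^ l) x = x" "y = orbit_pt n l f x"
      by (auto simp: fixpts_def)
    have "y \<in> fixed_Zk M n k"
      unfolding x(3) orbit_pt_eq_repeat_tuple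
      by (intro repeat_tuple_in_fixed_Zk[OF kl] funpow_in_topspace[OF f x(1)])
    then show "y \<in> fixpts (subtopology (power_top M n) (fixed_Zk M n k)) (Phi n f)"
      using Phi_orbit_pt_fixed[OF \<open>l dvd n\<close> kl(3) x(2)] x(3)
      unfolding fixpts_def topspace_subtopology_fixed_Zk by simp
  qed
qed

abbreviation homotopic_rel_endpoints ::
    "'a topology \<Rightarrow> 'a \<Rightarrow> 'a \<Rightarrow> (real \<Rightarrow> 'a) \<Rightarrow> (real \<Rightarrow> 'a) \<Rightarrow> bool" where
  "homotopic_rel_endpoints X a b p q \<equiv>
     homotopic_with (\<lambda>r. r 0 = a \<and> r 1 = b) (top_of_set {0..1}) X p q"

lemma fpc_rel_iff:
  "(y, y') \<in> fpc_rel Y h \<longleftrightarrow>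
     y \<in> fixpts Y h \<and> y' \<in> fixpts Y h \<and> (\<exists>\<alpha>. homotopic_rel_endpoints Y y y' \<alpha> (h \<circ> \<alpha>))"
  (is "_ \<longleftrightarrow> ?fixed_homotopic")
proof
  assume "(y, y') \<in> fpc_rel Y h"
  then show ?fixed_homotopic
    unfolding fpc_rel_def fixpts_def by blast
next
  assume fix_hom: ?fixed_homotopic
  then obtain \<alpha> where hom: "homotopic_rel_endpoints Y y y' \<alpha> (h \<circ> \<alpha>)" by blast
  have "pathin Y \<alpha>"
    using homotopic_with_imp_continuous_maps[OF hom] by (simp add: pathin_def)
  moreover have "\<alpha> 0 = y" "\<alpha> 1 = y'"
    using homotopic_with_imp_property[OF hom] by simp_all
  ultimately show "(y, y') \<in> fpc_rel Y h"
    using fix_hom hom unfolding fpc_rel_def fixpts_def by blast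
qed

lemma fpc_rel_subset: "fpc_rel Y h \<subseteq> fixpts Y h \<times> fixpts Y h"
  by (auto simp: fpc_rel_def fixpts_def)

lemma homotopic_rel_endpoints_compose:
  "homotopic_rel_endpoints X a b p q \<Longrightarrow> continuous_map X Y h \<Longrightarrow>
     homotopic_rel_endpoints Y (h a) (h b) (h \<circ> p) (h \<circ> q)"
  by (erule homotopic_with_compose_continuous_map_left) auto

lemma homotopic_rel_endpoints_eq:
  assumes pq: "homotopic_rel_endpoints X a b p q"
    and "\<And>t. t \<in> {0..1} \<Longrightarrow> p' t = p t" "\<And>t. t \<in> {0..1} \<Longrightarrow> q' t = q t"
  shows "homotopic_rel_endpoints X a b p' q'"
proof -
  have "homotopic_rel_endpoints X a b p' p" "homotopic_rel_endpoints X a b q q'"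
    using homotopic_with_imp_continuous_maps[OF pq] homotopic_with_imp_property[OF pq] assms(2,3)
    by (auto intro!: homotopic_with_equal elim: continuous_map_eq)
  then show ?thesis using pq by (blast intro: homotopic_with_trans)
qed

lemma homotopic_rel_endpoints_coordinate:
  assumes "homotopic_rel_endpoints (subtopology (product_topology X I) S) a b p q" "i \<in> I"
  shows "homotopic_rel_endpoints (X i) (a i) (b i) (\<lambda>t. p t i) (\<lambda>t. q t i)"
  using homotopic_rel_endpoints_compose[OF assms(1), of "X i" "\<lambda>x. x i"] assms(2)
  by (simp add: o_def continuous_map_from_subtopology continuous_map_product_projection)

lemma homotopic_rel_endpoints_repeat_tuple:
  assumes "k * l = n" "0 < k" "0 < l"
    and "\<And>j. j < l \<Longrightarrow> homotopic_rel_endpoints M (a j) (b j) (\<lambda>t. p t j) (\<lambda>t. q t j)"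
  shows "homotopic_rel_endpoints (subtopology (power_top M n) (fixed_Zk M n k))
           (repeat_tuple n l a) (repeat_tuple n l b)
           (\<lambda>t. repeat_tuple n l (p t)) (\<lambda>t. repeat_tuple n l (q t))"
proof -
  obtain H where H: "\<And>j. j < l \<Longrightarrow>
      continuous_map (prod_topology (top_of_set {0..1::real}) (top_of_set {0..1})) M (H j) \<and>
      (\<forall>t. H j (0, t) = p t j) \<and> (\<forall>t. H j (1, t) = q t j) \<and>
      (\<forall>s\<in>{0..1}. H j (s, 0) = a j \<and> H j (s, 1) = b j)"
    using assms(4) unfolding homotopic_with_def by metis
  show ?thesis
    unfolding homotopic_with_def
  proof (intro exI conjI allI ballI)
    show "continuous_map (prod_topology (top_of_set {0..1}) (top_of_set {0..1}))
            (subtopology (power_top M n) (fixed_Zk M n k)) (\<lambda>z. repeat_tuple n l (\<lambda>j. H j z))"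
      using H by (intro continuous_map_repeat_tuple[OF assms(1-3)]) blast
  qed (use H assms(3) in \<open>auto intro!: repeat_tuple_cong\<close>)
qed

lemma homotopic_rel_endpoints_cycle:
  assumes g: "continuous_map X X g" and "0 < l"
    and hom: "\<And>j. j < l \<Longrightarrow>
      homotopic_rel_endpoints X (a j) (b j) (p j) (g \<circ> p ((j + l - 1) mod l))"
  shows "homotopic_rel_endpoints X (a 0) (b 0) (p 0) ((g ^^ l) \<circ> p 0)"
proof -
  have chain: "homotopic_rel_endpoints X (a j) (b j) (p j) ((g ^^ j) \<circ> p 0)" if "j < l" for j
    using that
  proof (induction j)
    case 0
    note h0 = hom[OF 0]
    show ?case
      using homotopic_with_imp_continuous_maps[OF h0] homotopic_with_imp_property[OF h0] by simp
  next
    case (Suc j)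
    have step: "homotopic_rel_endpoints X (a (Suc j)) (b (Suc j)) (p (Suc j)) (g \<circ> p j)"
      using hom[OF Suc.prems] Suc.prems by simp
    have IH: "homotopic_rel_endpoints X (a j) (b j) (p j) ((g ^^ j) \<circ> p 0)"
      using Suc.IH Suc.prems by (simp del: comp_apply)
    have "g (a j) = a (Suc j)" "g (b j) = b (Suc j)"
      using homotopic_with_imp_property[OF step] homotopic_with_imp_property[OF IH] by auto
    then have
      "homotopic_rel_endpoints X (a (Suc j)) (b (Suc j)) (g \<circ> p j) ((g ^^ Suc j) \<circ> p 0)"
      using homotopic_rel_endpoints_compose[OF IH g] by (simp add: o_assoc)
    then show ?case using homotopic_with_trans[OF step] by blast
  qed
  have close: "homotopic_rel_endpoints X (a 0) (b 0) (p 0) (g \<circ> p (l - 1))"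
    using hom[of 0] assms(2) by simp
  have chain_last:
    "homotopic_rel_endpoints X (a (l - 1)) (b (l - 1)) (p (l - 1)) ((g ^^ (l - 1)) \<circ> p 0)"
    using chain assms(2) by simp
  have "g (a (l - 1)) = a 0" "g (b (l - 1)) = b 0"
    using homotopic_with_imp_property[OF close] homotopic_with_imp_property[OF chain_last] by auto
  then have "homotopic_rel_endpoints X (a 0) (b 0) (g \<circ> p (l - 1)) ((g ^^ l) \<circ> p 0)"
    using homotopic_rel_endpoints_compose[OF chain_last g] funpow_Suc_pred[OF assms(2), of g]
    by (simp add: o_assoc comp_def)
  then show ?thesis using homotopic_with_trans[OF close] by blast
qed

lemma fpc_rel_orbit_ptI:
  assumes f: "continuous_map M M f" and kl: "k * l = n" "0 < k" "0 < l"
    and rel: "(x, x') \<in> fpc_rel M (f ^^ l)"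
  shows "(orbit_pt n l f x, orbit_pt n l f x') \<in>
           fpc_rel (subtopology (power_top M n) (fixed_Zk M n k)) (Phi n f)"
proof -
  have "l dvd n" using kl by auto
  obtain \<gamma> where x: "x \<in> fixpts M (f ^^ l)" "x' \<in> fixpts M (f ^^ l)"
    and \<gamma>: "homotopic_rel_endpoints M x x' \<gamma> ((f ^^ l) \<circ> \<gamma>)"
    using rel unfolding fpc_rel_iff by blast
  have coordinates: "homotopic_rel_endpoints M ((f ^^ j) x) ((f ^^ j) x')
      (\<lambda>t. (f ^^ j) (\<gamma> t)) (\<lambda>t. if j = 0 then (f ^^ l) (\<gamma> t) else (f ^^ j) (\<gamma> t))" for j
  proof (cases "j = 0")
    case True
    then show ?thesis using \<gamma> by (simp add: comp_def)
  next
    case False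
    have "continuous_map (top_of_set {0..1}) M ((f ^^ j) \<circ> \<gamma>)"
      using homotopic_with_imp_continuous_maps[OF \<gamma>] continuous_map_funpow[OF f]
      by (blast intro: continuous_map_compose)
    then show ?thesis using False homotopic_with_imp_property[OF \<gamma>] by (simp add: comp_def)
  qed
  have "homotopic_rel_endpoints (subtopology (power_top M n) (fixed_Zk M n k))
          (orbit_pt n l f x) (orbit_pt n l f x')
          (orbit_pt n l f \<circ> \<gamma>) (Phi n f \<circ> (orbit_pt n l f \<circ> \<gamma>))"
    unfolding comp_def Phi_orbit_pt[OF \<open>l dvd n\<close> kl(3)] unfolding orbit_pt_eq_repeat_tuple
    by (intro homotopic_rel_endpoints_repeat_tuple[OF kl] coordinates)
  moreover have "orbit_pt n l f x \<in> fixpts (subtopology (power_top M n) (fixed_Zk M n k)) (Phi n f)"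
      "orbit_pt n l f x' \<in> fixpts (subtopology (power_top M n) (fixed_Zk M n k)) (Phi n f)"
    using x fixpts_Phi_eq[OF f kl] by auto
  ultimately show ?thesis unfolding fpc_rel_iff by blast
qed

lemma fpc_rel_orbit_ptD:
  assumes f: "continuous_map M M f" and kl: "k * l = n" "0 < k" "0 < l"
    and x: "x \<in> fixpts M (f ^^ l)" "x' \<in> fixpts M (f ^^ l)"
    and rel: "(orbit_pt n l f x, orbit_pt n l f x') \<in>
           fpc_rel (subtopology (power_top M n) (fixed_Zk M n k)) (Phi n f)"
  shows "(x, x') \<in> fpc_rel M (f ^^ l)"
proof -
  have "l dvd n" "l \<le> n" "0 < n" using kl by auto
  obtain \<alpha> where \<alpha>: "homotopic_rel_endpoints (subtopology (power_top M n) (fixed_Zk M n k))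
      (orbit_pt n l f x) (orbit_pt n l f x') \<alpha> (Phi n f \<circ> \<alpha>)"
    using rel unfolding fpc_rel_iff by blast
  (* \<alpha> t is periodic only for t in [0,1], so pass to its periodic normalisation first *)
  have "continuous_map (top_of_set {0..1}) (subtopology (power_top M n) (fixed_Zk M n k)) \<alpha>"
    using homotopic_with_imp_continuous_maps[OF \<alpha>] by blast
  then have "\<alpha> t \<in> fixed_Zk M n k" if "t \<in> {0..1}" for t
    using that continuous_map_image_subset_topspace by (fastforce simp: topspace_subtopology_fixed_Zk)
  then have rep: "repeat_tuple n l (\<alpha> t) = \<alpha> t" if "t \<in> {0..1}" for t
    using that fixed_Zk_eq_repeat_tuple[OF kl] by blast
  have Phi_\<alpha>: "Phi n f (\<alpha> t) = repeat_tuple n l (\<lambda>j. f (\<alpha> t ((j + l - 1) mod l)))"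
    if "t \<in> {0..1}" for t
    using Phi_repeat_tuple[OF \<open>l dvd n\<close> kl(3), of f "\<alpha> t"] rep[OF that] by simp
  have periodic_hom: "homotopic_rel_endpoints (subtopology (power_top M n) (fixed_Zk M n k))
      (orbit_pt n l f x) (orbit_pt n l f x') (\<lambda>t. repeat_tuple n l (\<alpha> t))
      (\<lambda>t. repeat_tuple n l (\<lambda>j. f (\<alpha> t ((j + l - 1) mod l))))"
    by (rule homotopic_rel_endpoints_eq[OF \<alpha>]) (simp_all add: rep Phi_\<alpha>)
  have "homotopic_rel_endpoints M (orbit_pt n l f x j) (orbit_pt n l f x' j)
      (\<lambda>t. \<alpha> t j) (f \<circ> (\<lambda>t. \<alpha> t ((j + l - 1) mod l)))" if "j < l" for j
    using homotopic_rel_endpoints_coordinate[OF periodic_hom[unfolded power_top_def], of j]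
      that \<open>l \<le> n\<close> by (simp add: repeat_tuple_nth_less comp_def)
  from homotopic_rel_endpoints_cycle[where p = "\<lambda>j t. \<alpha> t j", OF f kl(3) this]
  have "homotopic_rel_endpoints M x x' (\<lambda>t. \<alpha> t 0) ((f ^^ l) \<circ> (\<lambda>t. \<alpha> t 0))"
    using \<open>0 < n\<close> by (simp add: orbit_pt_def)
  then show ?thesis using x unfolding fpc_rel_iff by blast
qed

lemma Image_singleton_image_eq:
  assumes "g ` A = B" "R \<subseteq> A \<times> A" "S \<subseteq> B \<times> B"
    and "\<And>x y. x \<in> A \<Longrightarrow> y \<in> A \<Longrightarrow> (g x, g y) \<in> S \<longleftrightarrow> (x, y) \<in> R" and "x \<in> A"
  shows "g ` (R `` {x}) = S `` {g x}"
  using assms by blast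

lemma bij_betw_image_quotient:
  assumes g: "bij_betw g A B" and R: "R \<subseteq> A \<times> A" and S: "S \<subseteq> B \<times> B"
    and rel: "\<And>x y. x \<in> A \<Longrightarrow> y \<in> A \<Longrightarrow> (g x, g y) \<in> S \<longleftrightarrow> (x, y) \<in> R"
  shows "bij_betw (image g) (A // R) (B // S)"
  unfolding bij_betw_def
proof
  have "A // R \<subseteq> Pow A" using R by (auto simp: quotient_def)
  then show "inj_on (image g) (A // R)"
    using inj_on_image_Pow[OF bij_betw_imp_inj_on[OF g]] by (rule inj_on_subset[rotated])
  have "image g ` (A // R) = (\<lambda>x. S `` {g x}) ` A"
    using Image_singleton_image_eq[OF bij_betw_imp_surj_on[OF g] R S rel]
    by (auto simp: quotient_def)
  also have "\<dots> = B // S"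
    using bij_betw_imp_surj_on[OF g] by (auto simp: quotient_def)
  finally show "image g ` (A // R) = B // S" .
qed

theorem lemma5p7:
  fixes M :: "'a topology" and f :: "'a \<Rightarrow> 'a" and n k l :: nat
  assumes "closed_manifold M"
    and "continuous_map M M f"
    and "n \<ge> 2" and "k > 0" and "l > 0" and "k * l = n"
  shows "\<exists>F. bij_betw F
              (fix_classes (subtopology (power_top M n) (fixed_Zk M n k)) (Phi n f))
              (fix_classes M (f ^^ l)) \<and>
            (\<forall>x \<in> topspace M. (f ^^ l) x = x \<longrightarrow>
               F (fix_class (subtopology (power_top M n) (fixed_Zk M n k)) (Phi n f)
                    (orbit_pt n l f x)) = fix_class M (f ^^ l) x)"
proof -
  let ?Y = "subtopology (power_top M n) (fixed_Zk M n k)"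
  note kl = assms(6,4,5)
  have fixpts_eq: "fixpts ?Y (Phi n f) = orbit_pt n l f ` fixpts M (f ^^ l)"
    by (rule fixpts_Phi_eq[OF assms(2) kl])
  have start: "orbit_pt n l f x 0 = x" for x
    using assms(3,5) by (simp add: orbit_pt_def)
  have bij: "bij_betw (\<lambda>y. y 0) (fixpts ?Y (Phi n f)) (fixpts M (f ^^ l))"
    unfolding fixpts_eq
    by (rule bij_betw_byWitness[where f' = "orbit_pt n l f"]) (auto simp: start)
  have rel: "(y 0, y' 0) \<in> fpc_rel M (f ^^ l) \<longleftrightarrow> (y, y') \<in> fpc_rel ?Y (Phi n f)"
    if "y \<in> fixpts ?Y (Phi n f)" "y' \<in> fixpts ?Y (Phi n f)" for y y'
    using that fpc_rel_orbit_ptI[OF assms(2) kl] fpc_rel_orbit_ptD[OF assms(2) kl]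
    unfolding fixpts_eq by (auto simp: start)
  have "(\<lambda>y. y 0) ` fix_class ?Y (Phi n f) (orbit_pt n l f x) = fix_class M (f ^^ l) x"
    if "x \<in> topspace M" "(f ^^ l) x = x" for x
  proof -
    have "orbit_pt n l f x \<in> fixpts ?Y (Phi n f)"
      unfolding fixpts_eq by (intro imageI) (simp add: fixpts_def that)
    then have "(\<lambda>y. y 0) ` (fpc_rel ?Y (Phi n f) `` {orbit_pt n l f x}) =
        fpc_rel M (f ^^ l) `` {orbit_pt n l f x 0}"
      using Image_singleton_image_eq[OF bij_betw_imp_surj_on[OF bij] fpc_rel_subset
            fpc_rel_subset rel] by blast
    then show ?thesis unfolding fix_class_def start .
  qed
  then show ?thesis
    using bij_betw_image_quotient[OF bij fpc_rel_subset fpc_rel_subset rel]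
    unfolding fix_classes_def by blast
qed

end
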